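(* Let $s\in(0,1]$, $r=1-s$, and let $\{a_n\}_{n\in\mathbb Z}$ be i.i.d. geometric random variables on $\{1,2,\dots\}$ with $\mathbb P[a_0>i]=r^i$ for $i\ge 0$. Let $N_n=\#\{m\in\mathbb Z: m<n,\ m+a_m>n\}+1$ (the stationary population process), and let $G(z)=\mathbb E[z^{N_0}]$, $z\in[0,1]$, be the probability generating function of $N_0$. Then $$G(z)=z\,G(rz+s)\qquad\text{for all } z\in[0,1].$$ *)

theory Defs
  imports "HOL-Probability.Probability"
begin

definition pop0 :: "(int \<Rightarrow> 'a \<Rightarrow> nat) \<Rightarrow> 'a \<Rightarrow> nat" where
  "pop0 a \<omega> = card {m::int. m < 0 \<and> m + int (a m \<omega>) > 0} + 1"

definition pgf :: "'a measure \<Rightarrow> ('a \<Rightarrow> nat) \<Rightarrow> real \<Rightarrow> real" where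
  "pgf M X z = (\<integral>\<omega>. z ^ X \<omega> \<partial>M)"

end

theory Submission
  imports Defs
begin

text \<open>
  If no individual arriving before time \<open>-n\<close> is still present at time 0, then \<open>z ^ N\<^sub>0\<close> is
  \<open>z\<close> times a product of \<open>n\<close> independent factors, one per arrival time \<open>m \<in> [-n, -1]\<close>,
  equal to \<open>z\<close> or 1 according as that individual survives. The expected product is
  \<open>\<Prod>k=1..n. 1 - r^k (1 - z)\<close>, and the event excluded by the truncation has probability
  \<open>O(r^n)\<close>, so \<open>G(z) = z \<Prod>k\<ge>1. (1 - r^k (1 - z))\<close>. Substituting \<open>r z + s = 1 - r (1 - z)\<close>
  shifts the index of the product by one, which is the functional equation.
\<close>

definition survives :: "(int \<Rightarrow> 'a \<Rightarrow> nat) \<Rightarrow> int \<Rightarrow> 'a \<Rightarrow> bool" where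
  "survives a m \<omega> \<longleftrightarrow> 0 < m + int (a m \<omega>)"

definition survivor_before :: "(int \<Rightarrow> 'a \<Rightarrow> nat) \<Rightarrow> nat \<Rightarrow> 'a \<Rightarrow> bool" where
  "survivor_before a n \<omega> \<longleftrightarrow> (\<exists>m < - int n. survives a m \<omega>)"

definition survivor_weight :: "(int \<Rightarrow> 'a \<Rightarrow> nat) \<Rightarrow> nat \<Rightarrow> real \<Rightarrow> 'a \<Rightarrow> real" where
  "survivor_weight a n z \<omega> = (\<Prod>m\<in>{- int n..-1}. if survives a m \<omega> then z else 1)"

definition survival_prod :: "'b \<Rightarrow> nat \<Rightarrow> 'b \<Rightarrow> 'b::comm_ring_1" where
  "survival_prod r n z = (\<Prod>k=1..n. 1 - r ^ k * (1 - z))"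

lemma prod_if_const_eq_power:
  "finite A \<Longrightarrow> (\<Prod>m\<in>A. if P m then z else 1) = (z::'b::comm_monoid_mult) ^ card {m\<in>A. P m}"
  by (simp add: prod.If_cases Int_def)

lemma survivor_before_antimono: "survivor_before a k \<omega> \<Longrightarrow> n \<le> k \<Longrightarrow> survivor_before a n \<omega>"
  unfolding survivor_before_def by force

lemma power_pop0_eq_survivor_weight:
  assumes "\<not> survivor_before a n \<omega>"
  shows "z ^ pop0 a \<omega> = z * survivor_weight a n z \<omega>"
proof -
  have "{m. m < 0 \<and> m + int (a m \<omega>) > 0} = {m\<in>{- int n..-1}. survives a m \<omega>}"
    using assms unfolding survivor_before_def survives_def by force
  then show ?thesis
    unfolding pop0_def survivor_weight_def by (subst prod_if_const_eq_power) auto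
qed

lemma survivor_weight_bounds:
  "z \<in> {0..1} \<Longrightarrow> 0 \<le> survivor_weight a n z \<omega> \<and> survivor_weight a n z \<omega> \<le> 1"
  unfolding survivor_weight_def by (auto intro!: prod_nonneg prod_le_1)

text \<open>Infinitely many survivors make the set in \<^const>\<open>pop0\<close> infinite, and its \<open>card\<close> is then 0.\<close>
lemma pop0_eq_1_if_survivor_before_all:
  assumes "\<forall>n. survivor_before a n \<omega>"
  shows "pop0 a \<omega> = 1"
proof -
  let ?T = "{m. m < 0 \<and> m + int (a m \<omega>) > 0}"
  have "infinite ?T"
  proof
    assume "finite ?T"
    then have "?T \<subseteq> {Min (insert 0 ?T)..}" by auto
    moreover obtain m where "m < Min (insert 0 ?T)" "survives a m \<omega>"
      using assms[rule_format, of "nat (- Min (insert 0 ?T))"] \<open>finite ?T\<close>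
      unfolding survivor_before_def by auto
    ultimately show False
      using \<open>finite ?T\<close> unfolding survives_def by fastforce
  qed
  then show ?thesis unfolding pop0_def by simp
qed

lemma truncation_tendsto_power_pop0:
  "(\<lambda>n. if survivor_before a n \<omega> then z else z * survivor_weight a n z \<omega>) \<longlonglongrightarrow> z ^ pop0 a \<omega>"
proof (cases "\<exists>n. \<not> survivor_before a n \<omega>")
  case True
  then obtain n where "\<not> survivor_before a n \<omega>" by blast
  then have "\<forall>k\<ge>n. (if survivor_before a k \<omega> then z else z * survivor_weight a k z \<omega>) = z ^ pop0 a \<omega>"
    using survivor_before_antimono power_pop0_eq_survivor_weight by metis
  then show ?thesis
    by (intro tendsto_eventually eventually_sequentiallyI[of n]) simp
next
  case False
  then show ?thesis using pop0_eq_1_if_survivor_before_all[of a \<omega>] by simp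
qed

lemma survival_prod_shift:
  fixes r s z :: "'b::comm_ring_1"
  assumes "r = 1 - s"
  shows "(r * z + s) * survival_prod r n (r * z + s) = survival_prod r (Suc n) z"
proof -
  have weight: "r * z + s = 1 - r * (1 - z)" and factor: "1 - (r * z + s) = r * (1 - z)"
    using assms by (simp_all add: algebra_simps)
  have "survival_prod r (Suc n) z = (1 - r * (1 - z)) * (\<Prod>k=Suc 1..Suc n. 1 - r ^ k * (1 - z))"
    unfolding survival_prod_def by (subst prod.atLeast_Suc_atMost) simp_all
  also have "\<dots> = (1 - r * (1 - z)) * (\<Prod>k=1..n. 1 - r ^ k * (r * (1 - z)))"
    by (simp only: prod.shift_bounds_cl_Suc_ivl power_Suc mult.assoc mult.left_commute)
  also have "\<dots> = (r * z + s) * survival_prod r n (r * z + s)"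
    unfolding survival_prod_def factor by (simp only: weight)
  finally show ?thesis ..
qed

locale geometric_lifetimes = prob_space M for M :: "'a measure" +
  fixes a :: "int \<Rightarrow> 'a \<Rightarrow> nat" and s r :: real
  assumes s_pos: "0 < s" and s_le_1: "s \<le> 1" and r_eq: "r = 1 - s"
    and indep: "indep_vars (\<lambda>_. count_space UNIV) a UNIV"
    and prob_lifetime_gt: "\<And>n i. prob {\<omega> \<in> space M. a n \<omega> > i} = r ^ i"
begin

lemma r_nonneg: "0 \<le> r" and r_less_1: "r < 1"
  using s_pos s_le_1 r_eq by auto

lemma measurable_lifetime[measurable]: "a m \<in> measurable M (count_space UNIV)"
  using indep unfolding indep_vars_def by auto

lemma pred_survives[measurable]: "Measurable.pred M (survives a m)"
  unfolding survives_def by (rule measurable_compose[OF measurable_lifetime]) simp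

lemma pred_survivor_before[measurable]: "Measurable.pred M (survivor_before a n)"
  unfolding survivor_before_def by measurable

lemma borel_measurable_survivor_weight[measurable]: "survivor_weight a n z \<in> borel_measurable M"
  unfolding survivor_weight_def by measurable

lemma borel_measurable_power_pop0[measurable]: "(\<lambda>\<omega>. (z::real) ^ pop0 a \<omega>) \<in> borel_measurable M"
  by (rule borel_measurable_LIMSEQ_metric[where
        f = "\<lambda>n \<omega>. if survivor_before a n \<omega> then z else z * survivor_weight a n z \<omega>"])
    (simp_all add: truncation_tendsto_power_pop0)

lemma prob_survives:
  assumes "m < 0"
  shows "prob {\<omega> \<in> space M. survives a m \<omega>} = r ^ nat (- m)"
proof -
  have "survives a m \<omega> \<longleftrightarrow> a m \<omega> > nat (- m)" for \<omega>
    using assms unfolding survives_def by auto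
  then show ?thesis
    using prob_lifetime_gt by simp
qed

lemma expectation_survivor_weight: "expectation (survivor_weight a n z) = survival_prod r n z"
proof -
  let ?X = "\<lambda>m \<omega>. if survives a m \<omega> then z else 1"
  have indep_X: "indep_vars (\<lambda>_. borel) ?X {- int n..-1}"
    unfolding survives_def
    by (rule indep_vars_compose2[OF indep_vars_subset[OF indep, of "{- int n..-1}"]]) auto
  have expectation_X: "expectation (?X m) = 1 - r ^ nat (- m) * (1 - z)" if "m < 0" for m
  proof -
    let ?E = "{\<omega> \<in> space M. survives a m \<omega>}"
    have "integrable M (indicator ?E :: 'a \<Rightarrow> real)"
      by (intro integrable_real_indicator) (auto simp: less_top[symmetric])
    have "expectation (?X m) = expectation (\<lambda>\<omega>. 1 - (1 - z) * indicator ?E \<omega>)"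
      by (intro Bochner_Integration.integral_cong) (auto simp: indicator_def)
    also have "\<dots> = 1 - (1 - z) * prob ?E"
      using \<open>integrable M (indicator ?E)\<close>
      by (subst Bochner_Integration.integral_diff) (auto simp: prob_space)
    finally show ?thesis
      using prob_survives[OF that] by simp
  qed
  have "expectation (survivor_weight a n z) = (\<Prod>m\<in>{- int n..-1}. expectation (?X m))"
    unfolding survivor_weight_def
    by (rule indep_vars_lebesgue_integral)
      (use indep_X in \<open>auto intro!: integrable_const_bound[where B="max 1 \<bar>z\<bar>"]\<close>)
  also have "\<dots> = (\<Prod>m\<in>{- int n..-1}. 1 - r ^ nat (- m) * (1 - z))"
    by (rule prod.cong) (auto simp: expectation_X)
  also have "\<dots> = survival_prod r n z"
    unfolding survival_prod_def
    by (rule prod.reindex_bij_witness[where i="\<lambda>k. - int k" and j="\<lambda>m. nat (- m)"]) auto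
  finally show ?thesis .
qed

lemma prob_survivor_before: "prob {\<omega> \<in> space M. survivor_before a n \<omega>} \<le> r ^ Suc n / s"
proof -
  define A where "A k = {\<omega> \<in> space M. survives a (- int (Suc n + k)) \<omega>}" for k
  have prob_A: "prob (A k) = r ^ Suc n * r ^ k" for k
  proof -
    have "prob (A k) = r ^ nat (- (- int (Suc n + k)))"
      unfolding A_def by (rule prob_survives) simp
    then show ?thesis
      by (simp only: minus_minus nat_int power_add)
  qed
  have summable: "summable (\<lambda>k. r ^ Suc n * r ^ k)"
    using r_nonneg r_less_1 by (intro summable_mult summable_geometric) auto
  have "m < - int n \<longleftrightarrow> (\<exists>k. m = - int (Suc n + k))" for m
    by (rule iffI, rule exI[of _ "nat (- m - int n - 1)"]) auto
  then have "{\<omega> \<in> space M. survivor_before a n \<omega>} = (\<Union>k. A k)"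
    unfolding A_def survivor_before_def by auto
  also have "prob \<dots> \<le> (\<Sum>k. prob (A k))"
    using summable unfolding prob_A[symmetric]
    by (intro finite_measure_subadditive_countably) (auto simp: A_def)
  also have "\<dots> = r ^ Suc n / (1 - r)"
    using r_nonneg r_less_1 by (simp add: prob_A suminf_mult suminf_geometric divide_inverse)
  finally show ?thesis
    using r_eq by simp
qed

lemma pgf_pop0_approx:
  assumes z: "z \<in> {0..1}"
  shows "\<bar>pgf M (pop0 a) z - z * survival_prod r n z\<bar> \<le> r ^ Suc n / s"
proof -
  let ?B = "{\<omega> \<in> space M. survivor_before a n \<omega>}"
  let ?D = "\<lambda>\<omega>. z ^ pop0 a \<omega> - z * survivor_weight a n z \<omega>"
  have weight_bounds: "0 \<le> z * survivor_weight a n z \<omega> \<and> z * survivor_weight a n z \<omega> \<le> 1" for \<omega>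
    using z survivor_weight_bounds[OF z, of a n \<omega>] by (auto intro: mult_le_one)
  have power_bounds: "0 \<le> z ^ pop0 a \<omega> \<and> z ^ pop0 a \<omega> \<le> 1" for \<omega>
    using z by (auto intro: power_le_one)
  have "integrable M (\<lambda>\<omega>. z ^ pop0 a \<omega>)" "integrable M (survivor_weight a n z)"
    using power_bounds survivor_weight_bounds[OF z, of a n]
    by (auto intro!: integrable_const_bound[where B = 1] AE_I2 simp: abs_le_iff)
  have "\<bar>?D \<omega>\<bar> \<le> 1" for \<omega>
    using weight_bounds[of \<omega>] power_bounds[of \<omega>] by arith
  then have integrable_D: "integrable M ?D"
    by (intro integrable_const_bound[where B = 1] AE_I2) auto
  have D_bound: "\<bar>?D \<omega>\<bar> \<le> indicator ?B \<omega>" if "\<omega> \<in> space M" for \<omega>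
    using that weight_bounds[of \<omega>] power_bounds[of \<omega>] power_pop0_eq_survivor_weight[of a n \<omega> z]
    by (cases "survivor_before a n \<omega>") (auto simp: indicator_def)
  have "pgf M (pop0 a) z - z * survival_prod r n z = expectation ?D"
    using \<open>integrable M (\<lambda>\<omega>. z ^ pop0 a \<omega>)\<close> \<open>integrable M (survivor_weight a n z)\<close>
    by (simp add: pgf_def expectation_survivor_weight[symmetric])
  also have "\<bar>\<dots>\<bar> \<le> expectation (indicator ?B)"
    using D_bound
    by (intro integral_abs_bound[THEN order_trans] integral_mono integrable_abs integrable_D)
      (auto simp: less_top[symmetric] intro!: integrable_real_indicator)
  also have "\<dots> \<le> r ^ Suc n / s"
    using prob_survivor_before by simp
  finally show ?thesis .
qed

lemma survival_prod_tendsto_pgf: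
  assumes "z \<in> {0..1}"
  shows "(\<lambda>n. z * survival_prod r n z) \<longlonglongrightarrow> pgf M (pop0 a) z"
proof -
  have "(\<lambda>n. r ^ Suc n / s) \<longlonglongrightarrow> 0"
    using r_nonneg r_less_1 by (intro tendsto_divide_zero LIMSEQ_Suc LIMSEQ_power_zero) auto
  then have "(\<lambda>n. z * survival_prod r n z - pgf M (pop0 a) z) \<longlonglongrightarrow> 0"
    by (rule Lim_null_comparison[rotated]) (use pgf_pop0_approx[OF assms] in \<open>auto simp: abs_minus_commute\<close>)
  then show ?thesis
    by (rule LIM_zero_cancel)
qed

end

theorem mainTheorem5:
  fixes M :: "'a measure" and a :: "int \<Rightarrow> 'a \<Rightarrow> nat" and s r :: real
  assumes "prob_space M"
    and "0 < s" and "s \<le> 1" and "r = 1 - s"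
    and "prob_space.indep_vars M (\<lambda>_. count_space UNIV) a UNIV"
    and "\<And>n i. measure M {\<omega> \<in> space M. a n \<omega> > i} = r ^ i"
  shows "\<forall>z\<in>{0..1}. pgf M (pop0 a) z = z * pgf M (pop0 a) (r * z + s)"
proof
  interpret geometric_lifetimes M a s r
    by (intro geometric_lifetimes.intro geometric_lifetimes_axioms.intro assms)
  fix z :: real
  assume z: "z \<in> {0..1}"
  have "0 \<le> r * z" "r * z \<le> r"
    using z r_nonneg by (auto intro: mult_left_le)
  then have "r * z + s \<in> {0..1}"
    using r_eq s_pos by auto
  then have "(\<lambda>n. z * ((r * z + s) * survival_prod r n (r * z + s)))
      \<longlonglongrightarrow> z * pgf M (pop0 a) (r * z + s)"
    by (intro tendsto_mult_left survival_prod_tendsto_pgf)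
  moreover have "(\<lambda>n. z * ((r * z + s) * survival_prod r n (r * z + s)))
      \<longlonglongrightarrow> pgf M (pop0 a) z"
    unfolding survival_prod_shift[OF r_eq]
    using LIMSEQ_Suc[OF survival_prod_tendsto_pgf[OF z]] .
  ultimately show "pgf M (pop0 a) z = z * pgf M (pop0 a) (r * z + s)"
    using LIMSEQ_unique by blast
qed

end
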